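(* Let $\Omega$ be an infinite set, $\kappa$ a regular infinite cardinal with $\kappa\le|\Omega|$, $d$ a $\kappa$-uncrowded (respectively, uniformly $\kappa$-uncrowded) generalized metric on $\Omega$, and $G$ a subgroup of $S=\mathrm{Sym}(\Omega)$ all of whose elements are bounded with respect to $d$. Then for any subset $U\subseteq\mathrm{Sym}(\Omega)$ with $|U|<\kappa$, there exists a generalized metric $d'\le d$ on $\Omega$, again $\kappa$-uncrowded (respectively, uniformly $\kappa$-uncrowded), such that every element of $U$, and hence every element of $\langle G\cup U\rangle$, is bounded with respect to $d'$. Consequently, for subgroups of $S$, the property that there exists a (uniformly) $\kappa$-uncrowded generalized metric on $\Omega$ with respect to which every element of the subgroup is bounded is inherited by every subgroup $H$ with $H\preccurlyeq_\kappa G$, in particular by every $H$ with $H\approx_\kappa G$.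
   Context: $\mathrm{Sym}(\Omega)$ is the group of all permutations of $\Omega$, acting on the right. Let $P=\{r\in\mathbb R:r\ge0\}\cup\{\infty\}$. A generalized metric on $\Omega$ is a function $d:\Omega\times\Omega\to P$ satisfying the usual metric axioms (with values allowed to be $\infty$). $B_d(\alpha,r)=\{\beta:d(\alpha,\beta)<r\}$. $d$ is $\kappa$-uncrowded if $|B_d(\alpha,r)|<\kappa$ for all $\alpha\in\Omega$ and all $r<\infty$; uniformly $\kappa$-uncrowded if for every $r<\infty$ there is a cardinal $\lambda<\kappa$ with $|B_d(\alpha,r)|\le\lambda$ for all $\alpha$. $d'\le d$ means $d'(\alpha,\beta)\le d(\alpha,\beta)$ for all $\alpha,\beta$. For $g\in\mathrm{Sym}(\Omega)$, $\|g\|_d=\sup_{\alpha\in\Omega}d(\alpha,\alpha g)$, and $g$ is bounded if $\|g\|_d<\infty$. For subgroups $G_1,G_2\le S$, $G_1\preccurlyeq_\kappa G_2$ means there is $U\subseteq S$ with $|U|<\kappa$ and $G_1\le\langle G_2\cup U\rangle$; $G_1\approx_\kappa G_2$ means both $G_1\preccurlyeq_\kappa G_2$ and $G_2\preccurlyeq_\kappa G_1$. *)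

theory Defs
  imports "HOL-Algebra.Bij" "HOL-Algebra.Generated_Groups" "HOL-Library.Extended_Nonnegative_Real"
begin

notation
  ordLeq2 (infix \<open><=o\<close> 50) and
  ordLeq3 (infix \<open>\<le>o\<close> 50) and
  ordLess2 (infix \<open><o\<close> 50) and
  ordIso2 (infix \<open>=o\<close> 50) and
  card_of (\<open>|_|\<close>)

text \<open>Omega is the universe of the type 'a; Sym(Omega) is BijGroup UNIV.
  Values in P = [0,\<infinity>] are modelled by ennreal.
  Cardinals are card-order relations; |A| < kappa is |A| <o kappa.\<close>

abbreviation Sym :: "('a \<Rightarrow> 'a) monoid" where
  "Sym \<equiv> BijGroup (UNIV :: 'a set)"

definition gen_metric :: "('a \<Rightarrow> 'a \<Rightarrow> ennreal) \<Rightarrow> bool" where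
  "gen_metric d \<longleftrightarrow>
     (\<forall>x y. d x y = 0 \<longleftrightarrow> x = y) \<and>
     (\<forall>x y. d x y = d y x) \<and>
     (\<forall>x y z. d x z \<le> d x y + d y z)"

definition ball_d :: "('a \<Rightarrow> 'a \<Rightarrow> ennreal) \<Rightarrow> 'a \<Rightarrow> ennreal \<Rightarrow> 'a set" where
  "ball_d d x r = {y. d x y < r}"

definition uncrowded :: "'k rel \<Rightarrow> ('a \<Rightarrow> 'a \<Rightarrow> ennreal) \<Rightarrow> bool" where
  "uncrowded k d \<longleftrightarrow> (\<forall>x r. r < \<infinity> \<longrightarrow> |ball_d d x r| <o k)"

definition unif_uncrowded :: "'k rel \<Rightarrow> ('a \<Rightarrow> 'a \<Rightarrow> ennreal) \<Rightarrow> bool" where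
  "unif_uncrowded k d \<longleftrightarrow>
     (\<forall>r. r < \<infinity> \<longrightarrow> (\<exists>l :: 'a rel. Card_order l \<and> l <o k \<and> (\<forall>x. |ball_d d x r| \<le>o l)))"

definition perm_norm :: "('a \<Rightarrow> 'a \<Rightarrow> ennreal) \<Rightarrow> ('a \<Rightarrow> 'a) \<Rightarrow> ennreal" where
  "perm_norm d g = (SUP x. d x (g x))"

definition bounded_perm :: "('a \<Rightarrow> 'a \<Rightarrow> ennreal) \<Rightarrow> ('a \<Rightarrow> 'a) \<Rightarrow> bool" where
  "bounded_perm d g \<longleftrightarrow> perm_norm d g < \<infinity>"

definition le_metric :: "('a \<Rightarrow> 'a \<Rightarrow> ennreal) \<Rightarrow> ('a \<Rightarrow> 'a \<Rightarrow> ennreal) \<Rightarrow> bool" where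
  "le_metric d' d \<longleftrightarrow> (\<forall>x y. d' x y \<le> d x y)"

definition preceq_k :: "'k rel \<Rightarrow> ('a \<Rightarrow> 'a) set \<Rightarrow> ('a \<Rightarrow> 'a) set \<Rightarrow> bool" where
  "preceq_k k G1 G2 \<longleftrightarrow>
     (\<exists>U. U \<subseteq> carrier Sym \<and> |U| <o k \<and> G1 \<subseteq> generate Sym (G2 \<union> U))"

definition approx_k :: "'k rel \<Rightarrow> ('a \<Rightarrow> 'a) set \<Rightarrow> ('a \<Rightarrow> 'a) set \<Rightarrow> bool" where
  "approx_k k G1 G2 \<longleftrightarrow> preceq_k k G1 G2 \<and> preceq_k k G2 G1"

end

theory Submission
  imports Defs
begin

text \<open>
  Let \<open>d\<^sub>U\<close> be the path metric in which every step \<open>x \<mapsto> u x\<close> or \<open>u x \<mapsto> x\<close> with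
  \<open>u \<in> U\<close> has length at most 1: the distance of \<open>x\<close> and \<open>y\<close> is the infimum, over all
  finite chains from \<open>x\<close> to \<open>y\<close>, of the sum of the step lengths. Then \<open>d\<^sub>U \<le> d\<close>,
  every \<open>u \<in> U\<close> moves points by at most 1, and \<open>min 1 d \<le> d\<^sub>U\<close> keeps \<open>d\<^sub>U\<close> a metric.
  Bounded permutations form a subgroup, so all of \<open>\<langle>G \<union> U\<rangle>\<close> is \<open>d\<^sub>U\<close>-bounded.

  A chain of length less than \<open>r \<le> n\<close> contains at most \<open>n\<close> unit steps, and between two of
  them it stays, by the triangle inequality, inside a \<open>d\<close>-ball of radius \<open>r\<close>. Hence a
  \<open>d\<^sub>U\<close>-ball of radius \<open>r\<close> lies in the set reached from its centre by \<open>n\<close> rounds of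
  "take the \<open>d\<close>-ball of radius \<open>r\<close>, then apply an element of \<open>U \<union> U\<inverse> \<union> {id}\<close>",
  and regularity of \<open>\<kappa>\<close> makes this set smaller than \<open>\<kappa>\<close>, uniformly in the centre
  when \<open>d\<close> is uniformly uncrowded.
\<close>

lemma gen_metricD:
  assumes "gen_metric d"
  shows gen_metric_eq_0_iff: "d x y = 0 \<longleftrightarrow> x = y"
    and gen_metric_self: "d x x = 0"
    and gen_metric_commute: "d x y = d y x"
    and gen_metric_triangle: "d x z \<le> d x y + d y z"
  using assms unfolding gen_metric_def by blast+

lemma INF_add_const_ennreal:
  fixes f :: "'b \<Rightarrow> ennreal"
  shows "(INF i. f i + c) = (INF i. f i) + c"
  using continuous_at_Inf_mono[of "\<lambda>x. x + c" "range f"]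
  using continuous_add[of "at_right (Inf (range f))" "\<lambda>x. x" "\<lambda>x. c"]
  by (auto simp: mono_def image_comp)

lemma INF_const_add_ennreal:
  fixes f :: "'b \<Rightarrow> ennreal"
  shows "(INF i. c + f i) = c + (INF i. f i)"
  using INF_add_const_ennreal[of f c] by (simp add: add.commute)

lemma one_add_less_of_nat_add_one_ennreal:
  fixes p :: ennreal
  assumes "1 + p < of_nat n + 1"
  obtains m where "n = Suc m" and "p < of_nat m + 1"
proof (cases n)
  case 0
  with assms show ?thesis by (simp add: not_less[symmetric] add_increasing2)
next
  case (Suc m)
  then have "1 + p < 1 + (of_nat m + 1)" using assms by (simp add: add_ac)
  then show ?thesis using Suc that ennreal_add_left_cancel_less by blast
qed

lemma card_of_UN_le_Times:
  assumes "\<And>i. i \<in> I \<Longrightarrow> |A i| \<le>o |S|"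
  shows "|\<Union>i\<in>I. A i| \<le>o |I \<times> S|"
  using card_of_UNION_Sigma card_of_Sigma_mono1[of I A "\<lambda>_. S"] assms
  by (blast intro: ordLeq_transitive)

lemma carrier_Sym: "carrier Sym = Collect bij"
  by (auto simp: BijGroup_def Bij_def)

lemma mult_Sym: "g \<in> carrier Sym \<Longrightarrow> h \<in> carrier Sym \<Longrightarrow> g \<otimes>\<^bsub>Sym\<^esub> h = g \<circ> h"
  by (simp add: BijGroup_def compose_def restrict_UNIV comp_def)

lemma inv_Sym: "g \<in> carrier Sym \<Longrightarrow> inv\<^bsub>Sym\<^esub> g = inv_into UNIV g"
  using inv_BijGroup[of g UNIV] by (simp add: BijGroup_def restrict_UNIV)

section \<open>Bounded permutations\<close>

lemma bounded_permI:
  assumes "\<And>x. d x (g x) \<le> C" and "C < \<infinity>"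
  shows "bounded_perm d g"
proof -
  have "perm_norm d g \<le> C" unfolding perm_norm_def by (rule SUP_least) (rule assms(1))
  then show ?thesis unfolding bounded_perm_def using assms(2) by (rule le_less_trans)
qed

lemma dist_le_perm_norm: "d x (g x) \<le> perm_norm d g"
  unfolding perm_norm_def by (rule SUP_upper) simp

lemma bounded_perm_mono:
  assumes "le_metric d' d" and "bounded_perm d g"
  shows "bounded_perm d' g"
proof (rule bounded_permI)
  show "d' x (g x) \<le> perm_norm d g" for x
    using assms(1) unfolding le_metric_def by (metis dist_le_perm_norm order_trans)
  show "perm_norm d g < \<infinity>" using assms(2) unfolding bounded_perm_def .
qed

lemma perm_norm_id: "gen_metric d \<Longrightarrow> perm_norm d id = 0"
  unfolding perm_norm_def by (simp add: gen_metric_self)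

lemma perm_norm_comp:
  assumes "gen_metric d"
  shows "perm_norm d (g \<circ> h) \<le> perm_norm d h + perm_norm d g"
  unfolding perm_norm_def[of d "g \<circ> h"]
proof (rule SUP_least)
  fix x
  have "d x (g (h x)) \<le> d x (h x) + d (h x) (g (h x))" by (rule gen_metric_triangle[OF assms])
  also have "\<dots> \<le> perm_norm d h + perm_norm d g" by (intro add_mono dist_le_perm_norm)
  finally show "d x ((g \<circ> h) x) \<le> perm_norm d h + perm_norm d g" by simp
qed

lemma perm_norm_inv:
  assumes "gen_metric d" and "surj g"
  shows "perm_norm d (inv_into UNIV g) \<le> perm_norm d g"
  unfolding perm_norm_def[of d "inv_into UNIV g"]
proof (rule SUP_least)
  fix x
  have "d x (inv_into UNIV g x) = d (g (inv_into UNIV g x)) (inv_into UNIV g x)"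
    by (simp add: surj_f_inv_f[OF assms(2)])
  then show "d x (inv_into UNIV g x) \<le> perm_norm d g"
    by (simp add: gen_metric_commute[OF assms(1)] dist_le_perm_norm)
qed

lemma subgroup_bounded_perms:
  assumes "gen_metric d"
  shows "subgroup {g \<in> carrier Sym. bounded_perm d g} Sym"
proof (rule group.subgroupI[OF group_BijGroup])
  have "bounded_perm d id" unfolding bounded_perm_def by (simp add: perm_norm_id[OF assms])
  then show "{g \<in> carrier Sym. bounded_perm d g} \<noteq> {}"
    by (auto simp: carrier_Sym)
next
  fix g assume g: "g \<in> {g \<in> carrier Sym. bounded_perm d g}"
  then have "bij g" and inv_g: "inv\<^bsub>Sym\<^esub> g = inv_into UNIV g"
    by (auto simp: carrier_Sym inv_Sym)
  have "perm_norm d (inv_into UNIV g) < \<infinity>"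
    using g perm_norm_inv[OF assms bij_is_surj[OF \<open>bij g\<close>]] unfolding bounded_perm_def
    by (auto intro: le_less_trans)
  then show "inv\<^bsub>Sym\<^esub> g \<in> {g \<in> carrier Sym. bounded_perm d g}"
    unfolding inv_g bounded_perm_def by (simp add: carrier_Sym bij_imp_bij_inv[OF \<open>bij g\<close>])
next
  fix g h
  assume g: "g \<in> {g \<in> carrier Sym. bounded_perm d g}"
    and h: "h \<in> {g \<in> carrier Sym. bounded_perm d g}"
  then have "bij g" "bij h" and gh: "g \<otimes>\<^bsub>Sym\<^esub> h = g \<circ> h"
    by (auto simp: carrier_Sym mult_Sym)
  have "perm_norm d h + perm_norm d g < \<infinity>"
    using g h unfolding bounded_perm_def by (simp add: ennreal_add_less_top)
  then have "perm_norm d (g \<circ> h) < \<infinity>"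
    by (rule le_less_trans[OF perm_norm_comp[OF assms]])
  then show "g \<otimes>\<^bsub>Sym\<^esub> h \<in> {g \<in> carrier Sym. bounded_perm d g}"
    unfolding gh bounded_perm_def by (simp add: carrier_Sym bij_comp \<open>bij g\<close> \<open>bij h\<close>)
qed blast

lemma bounded_perm_generate:
  assumes "gen_metric d" and "H \<subseteq> carrier Sym" and "\<forall>h\<in>H. bounded_perm d h"
    and "g \<in> generate Sym H"
  shows "bounded_perm d g"
proof -
  have "generate Sym H \<subseteq> {g \<in> carrier Sym. bounded_perm d g}"
    using assms(2,3)
    by (intro group.generate_subgroup_incl[OF group_BijGroup _ subgroup_bounded_perms[OF assms(1)]])
      blast
  then show ?thesis using assms(4) by blast
qed

section \<open>The chain metric\<close>

definition neighbours :: "('a \<Rightarrow> 'a) set \<Rightarrow> 'a \<Rightarrow> 'a set" where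
  "neighbours U x = insert x {y. \<exists>u\<in>U. y = u x \<or> x = u y}"

definition step_dist :: "('a \<Rightarrow> 'a \<Rightarrow> ennreal) \<Rightarrow> ('a \<Rightarrow> 'a) set \<Rightarrow> 'a \<Rightarrow> 'a \<Rightarrow> ennreal" where
  "step_dist d U x y = min (d x y) (if y \<in> neighbours U x then 1 else \<infinity>)"

fun chain_length ::
  "('a \<Rightarrow> 'a \<Rightarrow> ennreal) \<Rightarrow> ('a \<Rightarrow> 'a) set \<Rightarrow> 'a \<Rightarrow> 'a list \<Rightarrow> 'a \<Rightarrow> ennreal" where
  "chain_length d U x [] y = step_dist d U x y"
| "chain_length d U x (z # zs) y = step_dist d U x z + chain_length d U z zs y"

definition chain_metric :: "('a \<Rightarrow> 'a \<Rightarrow> ennreal) \<Rightarrow> ('a \<Rightarrow> 'a) set \<Rightarrow> 'a \<Rightarrow> 'a \<Rightarrow> ennreal" where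
  "chain_metric d U x y = (INF zs. chain_length d U x zs y)"

lemma neighbours_commute: "y \<in> neighbours U x \<longleftrightarrow> x \<in> neighbours U y"
  unfolding neighbours_def by blast

lemma step_dist_commute: "gen_metric d \<Longrightarrow> step_dist d U x y = step_dist d U y x"
  unfolding step_dist_def by (simp add: gen_metric_commute neighbours_commute)

lemma step_dist_le: "step_dist d U x y \<le> d x y"
  unfolding step_dist_def by simp

lemma step_dist_le_one: "y \<in> neighbours U x \<Longrightarrow> step_dist d U x y \<le> 1"
  unfolding step_dist_def by simp

lemma step_dist_cases:
  "step_dist d U x y = d x y \<or> (step_dist d U x y = 1 \<and> y \<in> neighbours U x)"
  unfolding step_dist_def by (auto simp: min_def)

lemma min_one_le_step_dist: "min 1 (d x y) \<le> step_dist d U x y"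
  unfolding step_dist_def by (auto simp: min_def)

lemma min_one_triangle:
  assumes "gen_metric d"
  shows "min 1 (d x z) \<le> min 1 (d x y) + min 1 (d y z)"
proof (cases "d x y \<le> 1 \<and> d y z \<le> 1")
  case True
  then show ?thesis using gen_metric_triangle[OF assms, of x z y] by (auto simp: min_def)
next
  case False
  then have "1 \<le> min 1 (d x y) + min 1 (d y z)" by (auto simp: min_def add_increasing add_increasing2)
  then show ?thesis by (rule order_trans[rotated]) simp
qed

lemma chain_length_append:
  "chain_length d U x (zs @ y # ws) z = chain_length d U x zs y + chain_length d U y ws z"
  by (induction zs arbitrary: x) (auto simp: add.assoc)

lemma chain_length_rev:
  assumes "gen_metric d"
  shows "chain_length d U x zs y = chain_length d U y (rev zs) x"
proof (induction zs arbitrary: x)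
  case Nil
  then show ?case by (simp add: step_dist_commute[OF assms])
next
  case (Cons z zs)
  then show ?case
    by (simp add: chain_length_append step_dist_commute[OF assms, of U x z] add.commute)
qed

lemma min_one_le_chain_length:
  assumes "gen_metric d"
  shows "min 1 (d x y) \<le> chain_length d U x zs y"
proof (induction zs arbitrary: x)
  case Nil
  then show ?case by (simp add: min_one_le_step_dist)
next
  case (Cons z zs)
  have "min 1 (d x y) \<le> min 1 (d x z) + min 1 (d z y)" by (rule min_one_triangle[OF assms])
  also have "\<dots> \<le> chain_length d U x (z # zs) y"
    using add_mono[OF min_one_le_step_dist Cons] by simp
  finally show ?case .
qed

lemma chain_metric_le_step_dist: "chain_metric d U x y \<le> step_dist d U x y"
  unfolding chain_metric_def by (metis INF_lower UNIV_I chain_length.simps(1))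

lemma chain_metric_le: "chain_metric d U x y \<le> d x y"
  using chain_metric_le_step_dist step_dist_le by (rule order_trans)

lemma gen_metric_chain_metric:
  assumes "gen_metric d"
  shows "gen_metric (chain_metric d U)"
  unfolding gen_metric_def
proof (intro conjI allI)
  fix x y
  have "min 1 (d x y) \<le> chain_metric d U x y"
    unfolding chain_metric_def by (rule INF_greatest) (rule min_one_le_chain_length[OF assms])
  moreover have "chain_metric d U x x = 0"
    using chain_metric_le[of d U x x] by (simp add: gen_metric_self[OF assms])
  ultimately show "chain_metric d U x y = 0 \<longleftrightarrow> x = y"
    by (auto simp: min_def gen_metric_eq_0_iff[OF assms] split: if_splits)
next
  fix x y
  have "chain_metric d U x y = (INF zs. chain_length d U y (rev zs) x)"
    unfolding chain_metric_def by (rule INF_cong[OF refl chain_length_rev[OF assms]])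
  also have "\<dots> = (INF zs \<in> range rev. chain_length d U y zs x)"
    by (simp add: image_comp)
  also have "range rev = (UNIV :: 'a list set)"
    by (metis surj_def rev_rev_ident)
  finally show "chain_metric d U x y = chain_metric d U y x"
    unfolding chain_metric_def by simp
next
  fix x y z
  have "chain_metric d U x z \<le> (INF zs. INF ws. chain_length d U x zs y + chain_length d U y ws z)"
    unfolding chain_metric_def
    by (intro INF_greatest INF_lower2[of "zs @ y # ws" for zs ws]) (auto simp: chain_length_append)
  also have "\<dots> = chain_metric d U x y + chain_metric d U y z"
    unfolding chain_metric_def by (simp add: INF_add_const_ennreal INF_const_add_ennreal)
  finally show "chain_metric d U x z \<le> chain_metric d U x y + chain_metric d U y z" .
qed

lemma le_metric_chain_metric: "le_metric (chain_metric d U) d"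
  unfolding le_metric_def by (simp add: chain_metric_le)

lemma bounded_perm_chain_metric:
  assumes "u \<in> U"
  shows "bounded_perm (chain_metric d U) u"
proof (rule bounded_permI)
  have "u x \<in> neighbours U x" for x using assms unfolding neighbours_def by blast
  then show "chain_metric d U x (u x) \<le> 1" for x
    using chain_metric_le_step_dist step_dist_le_one order_trans by metis
qed simp

lemma bounded_perm_generate_chain_metric:
  assumes "gen_metric d" and "G \<subseteq> carrier Sym" and "\<forall>g\<in>G. bounded_perm d g"
    and "U \<subseteq> carrier Sym" and "g \<in> generate Sym (G \<union> U)"
  shows "bounded_perm (chain_metric d U) g"
proof (rule bounded_perm_generate[OF gen_metric_chain_metric[OF assms(1)] _ _ assms(5)])
  show "G \<union> U \<subseteq> carrier Sym" using assms(2,4) by blast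
  show "\<forall>h\<in>G \<union> U. bounded_perm (chain_metric d U) h"
    using assms(3) bounded_perm_mono[OF le_metric_chain_metric] bounded_perm_chain_metric by blast
qed

section \<open>Balls of the chain metric\<close>

primrec hop_ball :: "('a \<Rightarrow> 'a \<Rightarrow> ennreal) \<Rightarrow> ('a \<Rightarrow> 'a) set \<Rightarrow> ennreal \<Rightarrow> nat \<Rightarrow> 'a \<Rightarrow> 'a set" where
  "hop_ball d U r 0 w = ball_d d w r"
| "hop_ball d U r (Suc n) w = (\<Union>x\<in>ball_d d w r. \<Union>z\<in>neighbours U x. hop_ball d U r n z)"

lemma hop_ball_SucI:
  "x \<in> ball_d d w r \<Longrightarrow> z \<in> neighbours U x \<Longrightarrow> y \<in> hop_ball d U r n z \<Longrightarrow>
    y \<in> hop_ball d U r (Suc n) w"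
  by auto

lemma ball_subset_hop_ball:
  assumes "gen_metric d"
  shows "ball_d d w r \<subseteq> hop_ball d U r n w"
proof (induction n)
  case (Suc n)
  show ?case
  proof
    fix y assume y: "y \<in> ball_d d w r"
    then have "w \<in> ball_d d w r"
      unfolding ball_d_def by (simp add: gen_metric_self[OF assms] le_less_trans)
    moreover have "w \<in> neighbours U w" unfolding neighbours_def by simp
    ultimately show "y \<in> hop_ball d U r (Suc n) w" using y Suc by (blast intro: hop_ball_SucI)
  qed
qed simp

text \<open>Induction step along a chain, with \<open>rest\<close> the claim for the remainder of length \<open>p\<close>:
  a step of length \<open>d x z\<close> stays in the current \<open>d\<close>-ball, a unit step starts a new round.\<close>

lemma hop_ball_step:
  assumes gm: "gen_metric d"
    and lt_r: "d w x + (step_dist d U x z + p) < r"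
    and lt_n: "step_dist d U x z + p < of_nat n + 1"
    and rest: "\<And>w' n'. d w' z + p < r \<Longrightarrow> p < of_nat n' + 1 \<Longrightarrow> y \<in> hop_ball d U r n' w'"
  shows "y \<in> hop_ball d U r n w"
  using step_dist_cases[of d U x z]
proof
  assume step: "step_dist d U x z = d x z"
  have "d w z + p \<le> d w x + (d x z + p)"
    using add_right_mono[OF gen_metric_triangle[OF gm, of w z x]] by (simp add: add.assoc)
  then have "d w z + p < r" using lt_r unfolding step by (rule le_less_trans)
  moreover have "p < of_nat n + 1" using lt_n by (rule le_less_trans[rotated]) simp
  ultimately show ?thesis by (rule rest)
next
  assume "step_dist d U x z = 1 \<and> z \<in> neighbours U x"
  then have step: "step_dist d U x z = 1" and z: "z \<in> neighbours U x" by simp_all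
  obtain m where n: "n = Suc m" and "p < of_nat m + 1"
    using lt_n step one_add_less_of_nat_add_one_ennreal by auto
  moreover have "d z z + p < r"
  proof -
    have "p \<le> d w x + (1 + p)" by (intro add_increasing zero_le order_refl)
    then have "p < r" using lt_r unfolding step by (rule le_less_trans)
    then show ?thesis by (simp add: gen_metric_self[OF gm])
  qed
  ultimately have "y \<in> hop_ball d U r m z" by (intro rest)
  have "d w x < r" using lt_r by (rule le_less_trans[rotated]) simp
  then have "x \<in> ball_d d w r" unfolding ball_d_def by simp
  from this z \<open>y \<in> hop_ball d U r m z\<close> show ?thesis unfolding n by (rule hop_ball_SucI)
qed

lemma chain_in_hop_ball:
  assumes "gen_metric d"
  shows "d w x + chain_length d U x zs y < r \<Longrightarrow> chain_length d U x zs y < of_nat n + 1 \<Longrightarrow>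
    y \<in> hop_ball d U r n w"
proof (induction zs arbitrary: w x n)
  case Nil
  show ?case
  proof (rule hop_ball_step[OF assms, where z = y and p = 0])
    show "y \<in> hop_ball d U r n' w'" if "d w' y + 0 < r" for w' n'
      using that ball_subset_hop_ball[OF assms, of w' r U n'] unfolding ball_d_def by auto
  qed (use Nil in simp_all)
next
  case (Cons z zs)
  show ?case
    by (rule hop_ball_step[OF assms, where z = z and p = "chain_length d U z zs y"])
      (use Cons in simp_all)
qed

lemma ball_chain_metric_subset_hop_ball:
  assumes "gen_metric d" and "r < \<infinity>"
  obtains n where "\<And>w. ball_d (chain_metric d U) w r \<subseteq> hop_ball d U r n w"
proof -
  obtain n where n: "r < of_nat n"
    using ennreal_Ex_less_of_nat assms(2) by (metis infinity_ennreal_def)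
  have "ball_d (chain_metric d U) w r \<subseteq> hop_ball d U r n w" for w
  proof
    fix y assume "y \<in> ball_d (chain_metric d U) w r"
    then obtain zs where zs: "chain_length d U w zs y < r"
      unfolding ball_d_def chain_metric_def by (auto simp: INF_less_iff)
    show "y \<in> hop_ball d U r n w"
    proof (rule chain_in_hop_ball[OF assms(1)])
      show "d w w + chain_length d U w zs y < r" using zs by (simp add: gen_metric_self[OF assms(1)])
      have "r \<le> of_nat n + 1" using n by (simp add: add_increasing2 less_imp_le)
      with zs show "chain_length d U w zs y < of_nat n + 1" by (rule less_le_trans)
    qed
  qed
  then show thesis by (rule that)
qed

lemma neighbours_subset_image:
  assumes "U \<subseteq> carrier Sym"
  shows "neighbours U x \<subseteq> (\<lambda>v. v x) ` insert id (U \<union> inv_into UNIV ` U)"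
proof
  fix y assume "y \<in> neighbours U x"
  then consider "y = x" | u where "u \<in> U" "y = u x" | u where "u \<in> U" "x = u y"
    unfolding neighbours_def by blast
  then show "y \<in> (\<lambda>v. v x) ` insert id (U \<union> inv_into UNIV ` U)"
  proof cases
    case (3 u)
    then have "y = inv_into UNIV u x"
      using assms by (auto simp: carrier_Sym bij_is_inj)
    then show ?thesis using \<open>u \<in> U\<close> by blast
  qed auto
qed

lemma card_of_neighbours_le:
  assumes "U \<subseteq> carrier Sym"
  shows "|neighbours U x| \<le>o |insert id (U \<union> inv_into UNIV ` U)|"
  using card_of_mono1[OF neighbours_subset_image[OF assms]] card_of_image
  by (rule ordLeq_transitive)

lemma unif_uncrowded_iff_card_of:
  fixes d :: "'a \<Rightarrow> 'a \<Rightarrow> ennreal"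
  shows "unif_uncrowded k d \<longleftrightarrow> (\<forall>r < \<infinity>. \<exists>B :: 'a set. |B| <o k \<and> (\<forall>x. |ball_d d x r| \<le>o |B| ))"
proof -
  have "(\<exists>l :: 'a rel. Card_order l \<and> l <o k \<and> (\<forall>x. |ball_d d x r| \<le>o l)) \<longleftrightarrow>
    (\<exists>B :: 'a set. |B| <o k \<and> (\<forall>x. |ball_d d x r| \<le>o |B| ))" for r
  proof
    assume "\<exists>l :: 'a rel. Card_order l \<and> l <o k \<and> (\<forall>x. |ball_d d x r| \<le>o l)"
    then obtain l :: "'a rel" where l: "Card_order l" "l <o k" "\<And>x. |ball_d d x r| \<le>o l"
      by blast
    have Field_l: "|Field l| =o l" by (rule card_of_Field_ordIso[OF l(1)])
    have "|Field l| <o k" by (rule ordIso_ordLess_trans[OF Field_l l(2)])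
    moreover have "|ball_d d x r| \<le>o |Field l|" for x
      using l(3) ordIso_symmetric[OF Field_l] by (rule ordLeq_ordIso_trans)
    ultimately show "\<exists>B :: 'a set. |B| <o k \<and> (\<forall>x. |ball_d d x r| \<le>o |B| )" by blast
  next
    assume "\<exists>B :: 'a set. |B| <o k \<and> (\<forall>x. |ball_d d x r| \<le>o |B| )"
    then show "\<exists>l :: 'a rel. Card_order l \<and> l <o k \<and> (\<forall>x. |ball_d d x r| \<le>o l)"
      using card_of_Card_order by blast
  qed
  then show ?thesis unfolding unif_uncrowded_def by simp
qed

section \<open>Counting below a regular cardinal\<close>

locale infinite_regular_card =
  fixes k :: "'k rel"
  assumes Card_order: "Card_order k" and infinite_Field: "infinite (Field k)"
    and regular: "regularCard k"
begin

lemma card_of_UN_less: "|I| <o k \<Longrightarrow> (\<And>i. i \<in> I \<Longrightarrow> |A i| <o k) \<Longrightarrow> |\<Union>i\<in>I. A i| <o k"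
  using card_of_UNION_ordLess_infinite_Field_regularCard[OF regular] Card_order infinite_Field
  unfolding cinfinite_def by blast

lemma card_of_Un_less: "|A| <o k \<Longrightarrow> |B| <o k \<Longrightarrow> |A \<union> B| <o k"
  using card_of_Un_ordLess_infinite_Field[OF infinite_Field Card_order] by blast

lemma finite_card_of_less: "finite A \<Longrightarrow> |A| <o k"
  using finite_ordLess_infinite[of "|A|" k] card_of_Well_order[of A] infinite_Field Card_order
  by (simp add: card_order_on_well_order_on Field_card_of)

lemma card_of_Times_less:
  assumes "|A| <o k" and "|B| <o k"
  shows "|A \<times> B| <o k"
proof -
  have "|Pair a ` B| <o k" for a
    using card_of_image assms(2) by (rule ordLeq_ordLess_trans)
  then have "|\<Union>a\<in>A. Pair a ` B| <o k" by (rule card_of_UN_less[OF assms(1)])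
  moreover have "A \<times> B = (\<Union>a\<in>A. Pair a ` B)" by auto
  ultimately show ?thesis by simp
qed

lemma card_of_sym_closure_less:
  assumes "|U| <o k"
  shows "|insert id (U \<union> inv_into UNIV ` U)| <o k"
proof -
  have "|{id}| <o k" by (rule finite_card_of_less) simp
  moreover have "|inv_into UNIV ` U| <o k" using card_of_image assms by (rule ordLeq_ordLess_trans)
  then have "|U \<union> inv_into UNIV ` U| <o k" by (rule card_of_Un_less[OF assms])
  ultimately have "|{id} \<union> (U \<union> inv_into UNIV ` U)| <o k" by (rule card_of_Un_less)
  then show ?thesis by simp
qed

lemma card_of_hop_ball_less:
  assumes "uncrowded k d" and "r < \<infinity>" and "|N| <o k" and "\<And>x. |neighbours U x| \<le>o |N|"
  shows "|hop_ball d U r n w| <o k"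
proof (induction n arbitrary: w)
  case 0
  then show ?case using assms(1,2) unfolding uncrowded_def by simp
next
  case (Suc n)
  have "|ball_d d w r| <o k" using assms(1,2) unfolding uncrowded_def by simp
  moreover have "|\<Union>z\<in>neighbours U x. hop_ball d U r n z| <o k" for x
  proof (rule card_of_UN_less)
    show "|neighbours U x| <o k" using assms(4) assms(3) by (rule ordLeq_ordLess_trans)
  qed (rule Suc.IH)
  ultimately show ?case unfolding hop_ball.simps by (rule card_of_UN_less)
qed

lemma card_of_hop_ball_uniformly_bounded:
  fixes d :: "'a \<Rightarrow> 'a \<Rightarrow> ennreal" and B :: "'a set"
  assumes "k \<le>o |UNIV :: 'a set|"
    and "|B| <o k" and "\<And>x. |ball_d d x r| \<le>o |B|"
    and "|N| <o k" and "\<And>x. |neighbours U x| \<le>o |N|"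
  shows "\<exists>S :: 'a set. |S| <o k \<and> (\<forall>w. |hop_ball d U r n w| \<le>o |S| )"
proof (induction n)
  case 0
  then show ?case using assms(2,3) by auto
next
  case (Suc n)
  then obtain S :: "'a set" where S: "|S| <o k" "\<And>w. |hop_ball d U r n w| \<le>o |S|" by blast
  let ?T = "B \<times> (N \<times> S)"
  have "|hop_ball d U r (Suc n) w| \<le>o |?T|" for w
  proof -
    have "|\<Union>z\<in>neighbours U x. hop_ball d U r n z| \<le>o |N \<times> S|" for x
      using card_of_UN_le_Times[of "neighbours U x" "hop_ball d U r n" S] S(2)
        card_of_Times_mono1[OF assms(5)] ordLeq_transitive by blast
    then have "|hop_ball d U r (Suc n) w| \<le>o |ball_d d w r \<times> (N \<times> S)|"
      by (simp add: card_of_UN_le_Times)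
    also have "|ball_d d w r \<times> (N \<times> S)| \<le>o |?T|"
      by (rule card_of_Times_mono1[OF assms(3)])
    finally show ?thesis .
  qed
  moreover have "|?T| <o k"
    by (intro card_of_Times_less assms(2,4) S(1))
  \<comment> \<open>the bound has to be moved back into the point type, which \<open>k \<le>o |UNIV|\<close> allows\<close>
  moreover obtain S' :: "'a set" where "|?T| =o |S'|"
  proof -
    have "|?T| \<le>o |UNIV :: 'a set|"
      using \<open>|?T| <o k\<close> assms(1) ordLess_imp_ordLeq ordLeq_transitive by blast
    then show thesis using internalize_card_of_ordLeq[of ?T "|UNIV :: 'a set|"] that by auto
  qed
  ultimately show ?case
    using ordLeq_ordIso_trans ordIso_ordLess_trans ordIso_symmetric by metis
qed

lemma uncrowded_chain_metric:
  assumes "gen_metric d" and "uncrowded k d" and "U \<subseteq> carrier Sym" and "|U| <o k"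
  shows "uncrowded k (chain_metric d U)"
  unfolding uncrowded_def
proof (intro allI impI)
  fix x r assume r: "r < (\<infinity> :: ennreal)"
  obtain n where "ball_d (chain_metric d U) x r \<subseteq> hop_ball d U r n x"
    using ball_chain_metric_subset_hop_ball[OF assms(1) r] by metis
  moreover have "|hop_ball d U r n x| <o k"
    by (rule card_of_hop_ball_less[OF assms(2) r card_of_sym_closure_less[OF assms(4)]
          card_of_neighbours_le[OF assms(3)]])
  ultimately show "|ball_d (chain_metric d U) x r| <o k"
    using card_of_mono1 ordLeq_ordLess_trans by blast
qed

lemma unif_uncrowded_chain_metric:
  fixes d :: "'a \<Rightarrow> 'a \<Rightarrow> ennreal"
  assumes "k \<le>o |UNIV :: 'a set|"
    and "gen_metric d" and "unif_uncrowded k d" and "U \<subseteq> carrier Sym" and "|U| <o k"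
  shows "unif_uncrowded k (chain_metric d U)"
  unfolding unif_uncrowded_iff_card_of
proof (intro allI impI)
  fix r assume r: "r < (\<infinity> :: ennreal)"
  obtain B :: "'a set" where B: "|B| <o k" "\<And>x. |ball_d d x r| \<le>o |B|"
    using assms(3) r unfolding unif_uncrowded_iff_card_of by blast
  obtain n where n: "\<And>w. ball_d (chain_metric d U) w r \<subseteq> hop_ball d U r n w"
    using ball_chain_metric_subset_hop_ball[OF assms(2) r] by metis
  obtain S :: "'a set" where S: "|S| <o k" "\<And>w. |hop_ball d U r n w| \<le>o |S|"
    using card_of_hop_ball_uniformly_bounded[OF assms(1) B card_of_sym_closure_less[OF assms(5)]
        card_of_neighbours_le[OF assms(4)]] by blast
  have "|ball_d (chain_metric d U) w r| \<le>o |S|" for w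
    using card_of_mono1[OF n] S(2) ordLeq_transitive by blast
  with S(1) show "\<exists>B :: 'a set. |B| <o k \<and> (\<forall>x. |ball_d (chain_metric d U) x r| \<le>o |B| )"
    by blast
qed

end

section \<open>Enlarging the group of bounded permutations\<close>

lemma bounded_metric_extension:
  fixes C :: "('a \<Rightarrow> 'a \<Rightarrow> ennreal) \<Rightarrow> bool" and k :: "'k rel"
  assumes C_chain_metric:
      "\<And>d U. gen_metric d \<Longrightarrow> C d \<Longrightarrow> U \<subseteq> carrier Sym \<Longrightarrow> |U| <o k \<Longrightarrow> C (chain_metric d U)"
    and "gen_metric d" and "C d" and "subgroup G Sym" and "\<forall>g\<in>G. bounded_perm d g"
    and "U \<subseteq> carrier Sym" and "|U| <o k"
  shows "\<exists>d'. gen_metric d' \<and> le_metric d' d \<and> C d' \<and>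
    (\<forall>g\<in>U. bounded_perm d' g) \<and> (\<forall>g\<in>generate Sym (G \<union> U). bounded_perm d' g)"
proof (intro exI conjI ballI)
  show "gen_metric (chain_metric d U)" by (rule gen_metric_chain_metric[OF assms(2)])
  show "le_metric (chain_metric d U) d" by (rule le_metric_chain_metric)
  show "C (chain_metric d U)" using assms(2,3,6,7) by (rule C_chain_metric)
  show "bounded_perm (chain_metric d U) g" if "g \<in> U" for g
    using that by (rule bounded_perm_chain_metric)
  show "bounded_perm (chain_metric d U) g" if "g \<in> generate Sym (G \<union> U)" for g
    using assms(2) subgroup.subset[OF assms(4)] assms(5,6) that
    by (rule bounded_perm_generate_chain_metric)
qed

lemma bounded_metric_preceq_k:
  fixes C :: "('a \<Rightarrow> 'a \<Rightarrow> ennreal) \<Rightarrow> bool" and k :: "'k rel"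
  assumes C_chain_metric:
      "\<And>d U. gen_metric d \<Longrightarrow> C d \<Longrightarrow> U \<subseteq> carrier Sym \<Longrightarrow> |U| <o k \<Longrightarrow> C (chain_metric d U)"
    and "preceq_k k H G" and "subgroup G Sym"
    and "gen_metric d" and "C d" and "\<forall>g\<in>G. bounded_perm d g"
  shows "\<exists>d. gen_metric d \<and> C d \<and> (\<forall>h\<in>H. bounded_perm d h)"
proof -
  obtain U where U: "U \<subseteq> carrier Sym" "|U| <o k" and H: "H \<subseteq> generate Sym (G \<union> U)"
    using assms(2) unfolding preceq_k_def by blast
  show ?thesis
    using bounded_metric_extension[OF C_chain_metric assms(4,5,3,6) U] H by blast
qed

theorem theorem3p2:
  fixes k :: "'k rel"
  assumes inf_Omega: "infinite (UNIV :: 'a set)"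
    and card_k: "Card_order k" and inf_k: "infinite (Field k)" and reg_k: "regularCard k"
    and k_le: "k \<le>o |UNIV :: 'a set|"
  shows
    "(\<forall>(d :: 'a \<Rightarrow> 'a \<Rightarrow> ennreal) G U.
        gen_metric d \<and> uncrowded k d \<and> subgroup G Sym \<and> (\<forall>g\<in>G. bounded_perm d g) \<and>
        U \<subseteq> carrier Sym \<and> |U| <o k \<longrightarrow>
        (\<exists>d'. gen_metric d' \<and> le_metric d' d \<and> uncrowded k d' \<and>
              (\<forall>g\<in>U. bounded_perm d' g) \<and> (\<forall>g\<in>generate Sym (G \<union> U). bounded_perm d' g)))
   \<and> (\<forall>(d :: 'a \<Rightarrow> 'a \<Rightarrow> ennreal) G U.
        gen_metric d \<and> unif_uncrowded k d \<and> subgroup G Sym \<and> (\<forall>g\<in>G. bounded_perm d g) \<and>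
        U \<subseteq> carrier Sym \<and> |U| <o k \<longrightarrow>
        (\<exists>d'. gen_metric d' \<and> le_metric d' d \<and> unif_uncrowded k d' \<and>
              (\<forall>g\<in>U. bounded_perm d' g) \<and> (\<forall>g\<in>generate Sym (G \<union> U). bounded_perm d' g)))
   \<and> (\<forall>(G :: ('a \<Rightarrow> 'a) set) H.
        subgroup G Sym \<and> subgroup H Sym \<and> preceq_k k H G \<and>
        (\<exists>d. gen_metric d \<and> uncrowded k d \<and> (\<forall>g\<in>G. bounded_perm d g)) \<longrightarrow>
        (\<exists>d. gen_metric d \<and> uncrowded k d \<and> (\<forall>h\<in>H. bounded_perm d h)))
   \<and> (\<forall>(G :: ('a \<Rightarrow> 'a) set) H.
        subgroup G Sym \<and> subgroup H Sym \<and> preceq_k k H G \<and>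
        (\<exists>d. gen_metric d \<and> unif_uncrowded k d \<and> (\<forall>g\<in>G. bounded_perm d g)) \<longrightarrow>
        (\<exists>d. gen_metric d \<and> unif_uncrowded k d \<and> (\<forall>h\<in>H. bounded_perm d h)))
   \<and> (\<forall>(G :: ('a \<Rightarrow> 'a) set) H.
        subgroup G Sym \<and> subgroup H Sym \<and> approx_k k H G \<and>
        (\<exists>d. gen_metric d \<and> uncrowded k d \<and> (\<forall>g\<in>G. bounded_perm d g)) \<longrightarrow>
        (\<exists>d. gen_metric d \<and> uncrowded k d \<and> (\<forall>h\<in>H. bounded_perm d h)))
   \<and> (\<forall>(G :: ('a \<Rightarrow> 'a) set) H.
        subgroup G Sym \<and> subgroup H Sym \<and> approx_k k H G \<and>
        (\<exists>d. gen_metric d \<and> unif_uncrowded k d \<and> (\<forall>g\<in>G. bounded_perm d g)) \<longrightarrow>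
        (\<exists>d. gen_metric d \<and> unif_uncrowded k d \<and> (\<forall>h\<in>H. bounded_perm d h)))"
proof -
  interpret infinite_regular_card k using card_k inf_k reg_k by unfold_locales
  have unc: "uncrowded k (chain_metric d U)"
    if "gen_metric d" "uncrowded k d" "U \<subseteq> carrier Sym" "|U| <o k"
    for d :: "'a \<Rightarrow> 'a \<Rightarrow> ennreal" and U
    using that by (rule uncrowded_chain_metric)
  have unif: "unif_uncrowded k (chain_metric d U)"
    if "gen_metric d" "unif_uncrowded k d" "U \<subseteq> carrier Sym" "|U| <o k"
    for d :: "'a \<Rightarrow> 'a \<Rightarrow> ennreal" and U
    using k_le that by (rule unif_uncrowded_chain_metric)
  note extension = bounded_metric_extension[where C = "uncrowded k", OF unc]
    bounded_metric_extension[where C = "unif_uncrowded k", OF unif]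
  note inheritance = bounded_metric_preceq_k[where C = "uncrowded k", OF unc]
    bounded_metric_preceq_k[where C = "unif_uncrowded k", OF unif]
  show ?thesis
    unfolding approx_k_def
    by (intro conjI allI impI; elim conjE exE; (rule extension inheritance; assumption))
qed

end
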